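(* Let $L$ be a finite extension of $\mathbb{Z}_\mathrm{max}$ such that $L$ is selective, i.e. for all $x,y\in L$ either $x+y=x$ or $x+y=y$. Then $\mathrm{ui}(L/\mathbb{Z}_\mathrm{max})<\infty$.
   Context: A semifield is a commutative semiring in which every nonzero element is a unit. $\mathbb{Z}_\mathrm{max}=\mathbb{Z}\cup\{-\infty\}$ is the semifield with addition $\max$ and multiplication ordinary addition. An extension of a semifield $K$ is a semifield $L$ with an injective homomorphism $K\to L$; it is finite if $L$ is a finitely generated $K$-semimodule. The unit index is $\mathrm{ui}(L/K)=|L^\times/K^\times|$. *)

theory Defs
  imports Main
begin

class semifield = comm_semiring_1 +
  assumes nonzero_unit: "x \<noteq> 0 \<Longrightarrow> \<exists>y. x * y = 1"

text \<open>The semifield Z_max = Z \<union> {-\<infinity>}, represented as int option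
(None = -\<infinity>); addition is max, multiplication is ordinary addition.\<close>
type_synonym zmax = "int option"

fun zmax_add :: "zmax \<Rightarrow> zmax \<Rightarrow> zmax" where
  "zmax_add None y = y"
| "zmax_add x None = x"
| "zmax_add (Some a) (Some b) = Some (max a b)"

fun zmax_mult :: "zmax \<Rightarrow> zmax \<Rightarrow> zmax" where
  "zmax_mult (Some a) (Some b) = Some (a + b)"
| "zmax_mult _ _ = None"

definition zmax_zero :: zmax where "zmax_zero = None"
definition zmax_one :: zmax where "zmax_one = Some 0"

definition zmax_extension :: "(zmax \<Rightarrow> 'a::semifield) \<Rightarrow> bool" where
  "zmax_extension \<phi> \<longleftrightarrow> inj \<phi> \<and> \<phi> zmax_zero = 0 \<and> \<phi> zmax_one = 1 \<and>
     (\<forall>x y. \<phi> (zmax_add x y) = \<phi> x + \<phi> y) \<and>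
     (\<forall>x y. \<phi> (zmax_mult x y) = \<phi> x * \<phi> y)"

definition finite_extension :: "(zmax \<Rightarrow> 'a::semifield) \<Rightarrow> bool" where
  "finite_extension \<phi> \<longleftrightarrow> zmax_extension \<phi> \<and>
     (\<exists>S. finite S \<and> (\<forall>x::'a. \<exists>c. x = (\<Sum>s\<in>S. \<phi> (c s) * s)))"

definition selective :: "'a::semifield itself \<Rightarrow> bool" where
  "selective _ \<longleftrightarrow> (\<forall>x y :: 'a. x + y = x \<or> x + y = y)"

definition units :: "'a::semifield set" where
  "units = {x. \<exists>y. x * y = 1}"

definition base_units :: "(zmax \<Rightarrow> 'a::semifield) \<Rightarrow> 'a set" where
  "base_units \<phi> = \<phi> ` {x. \<exists>y. zmax_mult x y = zmax_one}"

text \<open>The cosets of L^\<times>/K^\<times>; the unit index is the number of them.\<close>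
definition unit_cosets :: "(zmax \<Rightarrow> 'a::semifield) \<Rightarrow> 'a set set" where
  "unit_cosets \<phi> = (\<lambda>x. (\<lambda>u. x * u) ` base_units \<phi>) ` units"

end

theory Submission
  imports Defs
begin

text \<open>In a selective semifield a finite sum equals one of its summands, so each nonzero
element of the generated semimodule is a single generator times a scalar of \<open>\<int>\<^sub>max\<close>,
and a nonzero scalar is a unit of \<open>\<int>\<^sub>max\<close>. Hence every unit coset is the coset of one
of the finitely many generators.\<close>

lemma sum_selective:
  fixes f :: "'b \<Rightarrow> 'a::comm_monoid_add"
  assumes sel: "\<And>x y :: 'a. x + y = x \<or> x + y = y" and "finite S"
  shows "sum f S = 0 \<or> (\<exists>s\<in>S. sum f S = f s)"
  using \<open>finite S\<close>
proof (induction S rule: finite_induct)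
  case (insert x F)
  then show ?case using sel[of "f x" "sum f F"] by auto
qed simp

lemma image_mult_coset_absorb:
  fixes B :: "'a::comm_monoid_mult set"
  assumes mult_closed: "\<And>u v. u \<in> B \<Longrightarrow> v \<in> B \<Longrightarrow> u * v \<in> B"
    and divisible: "\<And>u v. u \<in> B \<Longrightarrow> v \<in> B \<Longrightarrow> \<exists>w\<in>B. u * w = v"
    and "t \<in> B"
  shows "(\<lambda>u. t * s * u) ` B = (\<lambda>u. s * u) ` B"
proof
  show "(\<lambda>u. t * s * u) ` B \<subseteq> (\<lambda>u. s * u) ` B"
    using mult_closed[OF \<open>t \<in> B\<close>] by (force simp: ac_simps)
  show "(\<lambda>u. s * u) ` B \<subseteq> (\<lambda>u. t * s * u) ` B"
  proof
    fix y assume "y \<in> (\<lambda>u. s * u) ` B"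
    then obtain v where "v \<in> B" "y = s * v" by blast
    moreover obtain w where "w \<in> B" "t * w = v" using divisible[OF \<open>t \<in> B\<close> \<open>v \<in> B\<close>] by blast
    ultimately show "y \<in> (\<lambda>u. t * s * u) ` B" by (force simp: ac_simps)
  qed
qed

lemma zmax_units_eq_range_Some: "{x. \<exists>y. zmax_mult x y = zmax_one} = range Some"
proof -
  have "zmax_mult x y = zmax_one \<Longrightarrow> x \<in> range Some" for x y
    by (cases x; cases y) (auto simp: zmax_one_def)
  moreover have "zmax_mult (Some a) (Some (- a)) = zmax_one" for a
    by (simp add: zmax_one_def)
  ultimately show ?thesis by blast
qed

lemma base_units_eq:
  "base_units \<phi> = range (\<lambda>a. \<phi> (Some a))"
  unfolding base_units_def zmax_units_eq_range_Some by (simp add: image_image)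

lemma zmax_extension_mult_Some:
  "zmax_extension \<phi> \<Longrightarrow> \<phi> (Some a) * \<phi> (Some b) = \<phi> (Some (a + b))"
  unfolding zmax_extension_def by (metis zmax_mult.simps(1))

lemma base_units_coset_absorb:
  assumes "zmax_extension \<phi>"
  shows "(\<lambda>u. \<phi> (Some a) * s * u) ` base_units \<phi> = (\<lambda>u. s * u) ` base_units \<phi>"
proof (rule image_mult_coset_absorb)
  fix u v assume "u \<in> base_units \<phi>" "v \<in> base_units \<phi>"
  then obtain b c where "u = \<phi> (Some b)" "v = \<phi> (Some c)" by (auto simp: base_units_eq)
  with zmax_extension_mult_Some[OF assms] show "u * v \<in> base_units \<phi>"
    by (simp add: base_units_eq)
  have "u * \<phi> (Some (c - b)) = v"
    using \<open>u = _\<close> \<open>v = _\<close> zmax_extension_mult_Some[OF assms] by simp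
  then show "\<exists>w\<in>base_units \<phi>. u * w = v"
    by (auto simp: base_units_eq)
qed (simp add: base_units_eq)

lemma selective_generated_nonzero:
  fixes \<phi> :: "zmax \<Rightarrow> 'a::semifield"
  assumes "zmax_extension \<phi>" "selective TYPE('a)" "finite S"
    and "x = (\<Sum>s\<in>S. \<phi> (c s) * s)" "x \<noteq> 0"
  shows "\<exists>s\<in>S. \<exists>a. x = \<phi> (Some a) * s"
proof -
  have "\<phi> None = 0"
    using assms(1) by (simp add: zmax_extension_def zmax_zero_def)
  moreover obtain s where "s \<in> S" "x = \<phi> (c s) * s"
    using sum_selective[OF _ assms(3), of "\<lambda>s. \<phi> (c s) * s"] assms(2,4,5)
    by (auto simp: selective_def)
  ultimately show ?thesis
    using \<open>x \<noteq> 0\<close> by (cases "c s") auto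
qed

theorem mainTheorem9:
  fixes \<phi> :: "zmax \<Rightarrow> 'a::semifield"
  assumes "finite_extension \<phi>"
    and "selective TYPE('a)"
  shows "finite (unit_cosets \<phi>)"
proof -
  obtain S where "finite S" and gen: "\<forall>x::'a. \<exists>c. x = (\<Sum>s\<in>S. \<phi> (c s) * s)"
    and ext: "zmax_extension \<phi>"
    using assms(1) unfolding finite_extension_def by blast
  let ?coset = "\<lambda>x. (\<lambda>u. x * u) ` base_units \<phi>"
  have "?coset x \<in> ?coset ` S" if "x \<in> units" for x
  proof -
    have "x \<noteq> 0" using that by (auto simp: units_def)
    then obtain s a where "s \<in> S" "x = \<phi> (Some a) * s"
      using gen selective_generated_nonzero[OF ext assms(2) \<open>finite S\<close>] by meson
    then show ?thesis using base_units_coset_absorb[OF ext] by auto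
  qed
  then have "unit_cosets \<phi> \<subseteq> ?coset ` S"
    unfolding unit_cosets_def by blast
  then show ?thesis using \<open>finite S\<close> finite_subset by blast
qed

end
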